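(* Let $n\ge3$ and $\mathbf{q}\in(\Bbbk^\times)^n$; indices are modulo $n$. (1) Let $\alpha_0,\dots,\alpha_{n-1}\in\Bbbk^\times$ and set $p_i=\frac{\alpha_{i-1}}{\alpha_i}q_i$ for $0\le i<n$. The linear map $\phi_\alpha:A_n(\mathbf{q})\to A_n(\mathbf{p})$ with $\phi_\alpha(e_i)=e_i$, $\phi_\alpha(a_i)=\alpha_ia_i$, $\phi_\alpha(a_i^* )=a_i^*$ extends to an isomorphism. (2) Set $p_i=q_{i-1}$ for $0\le i<n$. The linear map $\psi:A_n(\mathbf{q})\to A_n(\mathbf{p})$ with $\psi(e_i)=e_{i+1}$, $\psi(a_i)=a_{i+1}$, $\psi(a_i^* )=a_{i+1}^*$ extends to an isomorphism. (3) Set $p_i=q_{n-i}^{-1}$ for $0\le i<n$. The linear map $\pi:A_n(\mathbf{q})\to A_n(\mathbf{p})$ with $\pi(e_i)=e_{n-i}$, $\pi(a_i)=a_{n-i-1}^*$, $\pi(a_i^* )=a_{n-i-1}$ extends to an isomorphism.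
   Context: $\Bbbk$ is an algebraically closed field of characteristic zero. Paths are written left to right. $A_n(\mathbf{q})=\Bbbk Q/(a_ia_i^*-q_ia_{i-1}^*a_{i-1},\ i=0,\dots,n-1)$, where $Q$ has vertices $e_0,\dots,e_{n-1}$ and arrows $a_i:e_i\to e_{i+1}$, $a_i^*:e_{i+1}\to e_i$, indices modulo $n$. *)

theory Defs
  imports "HOL-Algebra.QuotRing"
begin

definition alg_closed :: "'k::field itself \<Rightarrow> bool" where
  "alg_closed TYPE('k) \<longleftrightarrow>
     (\<forall>(c::nat \<Rightarrow> 'k) d. 0 < d \<and> c d \<noteq> 0 \<longrightarrow> (\<exists>x. (\<Sum>i\<le>d. c i * x ^ i) = 0))"

text \<open>Arrows of the cyclic double quiver Q with n vertices:
  Arr i = a_i : e_i -> e_(i+1),  Star i = a_i^* : e_(i+1) -> e_i  (indices mod n).\<close>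
datatype arr = Arr nat | Star nat

fun aidx :: "arr \<Rightarrow> nat" where
  "aidx (Arr i) = i" | "aidx (Star i) = i"

fun asrc :: "nat \<Rightarrow> arr \<Rightarrow> nat" where
  "asrc n (Arr i) = i" | "asrc n (Star i) = Suc i mod n"

fun atgt :: "nat \<Rightarrow> arr \<Rightarrow> nat" where
  "atgt n (Arr i) = Suc i mod n" | "atgt n (Star i) = i"

text \<open>Paths: trivial path at a vertex, or a nonempty list of composable arrows
  (written left to right).\<close>
datatype path = Triv nat | Pth "arr list"

fun valid_path :: "nat \<Rightarrow> path \<Rightarrow> bool" where
  "valid_path n (Triv v) = (v < n)"
| "valid_path n (Pth xs) =
     (xs \<noteq> [] \<and> (\<forall>x\<in>set xs. aidx x < n) \<and>
      (\<forall>j. Suc j < length xs \<longrightarrow> atgt n (xs ! j) = asrc n (xs ! Suc j)))"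

fun psrc :: "nat \<Rightarrow> path \<Rightarrow> nat" where
  "psrc n (Triv v) = v" | "psrc n (Pth xs) = asrc n (hd xs)"

fun ptgt :: "nat \<Rightarrow> path \<Rightarrow> nat" where
  "ptgt n (Triv v) = v" | "ptgt n (Pth xs) = atgt n (last xs)"

definition pconcat :: "nat \<Rightarrow> path \<Rightarrow> path \<Rightarrow> path option" where
  "pconcat n p r =
     (if ptgt n p = psrc n r then
        Some (case p of Triv _ \<Rightarrow> r
                      | Pth xs \<Rightarrow> (case r of Triv _ \<Rightarrow> p | Pth ys \<Rightarrow> Pth (xs @ ys)))
      else None)"

definition KQ :: "nat \<Rightarrow> (path \<Rightarrow> 'k::field) set" where
  "KQ n = {x. finite {r. x r \<noteq> 0} \<and> (\<forall>r. x r \<noteq> 0 \<longrightarrow> valid_path n r)}"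

definition pmul :: "nat \<Rightarrow> (path \<Rightarrow> 'k::field) \<Rightarrow> (path \<Rightarrow> 'k) \<Rightarrow> (path \<Rightarrow> 'k)" where
  "pmul n x y = (\<lambda>r. \<Sum>(p, s) \<in> {(p, s). x p \<noteq> 0 \<and> y s \<noteq> 0 \<and> pconcat n p s = Some r}.
                      x p * y s)"

definition pone :: "nat \<Rightarrow> (path \<Rightarrow> 'k::field)" where
  "pone n = (\<lambda>r. if (\<exists>v<n. r = Triv v) then 1 else 0)"

definition smult :: "'k::field \<Rightarrow> (path \<Rightarrow> 'k) \<Rightarrow> (path \<Rightarrow> 'k)" where
  "smult c x = (\<lambda>r. c * x r)"

definition kQ :: "nat \<Rightarrow> (path \<Rightarrow> 'k::field) ring" where
  "kQ n = \<lparr>carrier = KQ n, mult = pmul n, one = pone n, zero = (\<lambda>_. 0), add = (\<lambda>x y r. x r + y r)\<rparr>"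

definition pth :: "path \<Rightarrow> (path \<Rightarrow> 'k::field)" where
  "pth p = (\<lambda>r. if r = p then 1 else 0)"

definition ee :: "nat \<Rightarrow> (path \<Rightarrow> 'k::field)" where "ee i = pth (Triv i)"
definition aa :: "nat \<Rightarrow> (path \<Rightarrow> 'k::field)" where "aa i = pth (Pth [Arr i])"
definition ast :: "nat \<Rightarrow> (path \<Rightarrow> 'k::field)" where "ast i = pth (Pth [Star i])"

definition rels :: "nat \<Rightarrow> (nat \<Rightarrow> 'k::field) \<Rightarrow> (path \<Rightarrow> 'k) set" where
  "rels n q = {(\<lambda>r. pmul n (aa i) (ast i) r
                 - q i * pmul n (ast ((i + n - 1) mod n)) (aa ((i + n - 1) mod n)) r) | i. i < n}"

definition relideal :: "nat \<Rightarrow> (nat \<Rightarrow> 'k::field) \<Rightarrow> (path \<Rightarrow> 'k) set" where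
  "relideal n q = genideal (kQ n) (rels n q)"

definition Aq :: "nat \<Rightarrow> (nat \<Rightarrow> 'k::field) \<Rightarrow> (path \<Rightarrow> 'k) set ring" where
  "Aq n q = kQ n Quot relideal n q"

definition cls :: "nat \<Rightarrow> (nat \<Rightarrow> 'k::field) \<Rightarrow> (path \<Rightarrow> 'k) \<Rightarrow> (path \<Rightarrow> 'k) set" where
  "cls n q x = a_r_coset (kQ n) (relideal n q) x"

definition alg_iso :: "nat \<Rightarrow> (nat \<Rightarrow> 'k::field) \<Rightarrow> (nat \<Rightarrow> 'k)
                       \<Rightarrow> ((path \<Rightarrow> 'k) set \<Rightarrow> (path \<Rightarrow> 'k) set) \<Rightarrow> bool" where
  "alg_iso n q p f \<longleftrightarrow>
     f \<in> ring_iso (Aq n q) (Aq n p) \<and>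
     (\<forall>c x y. x \<in> KQ n \<longrightarrow> y \<in> KQ n \<longrightarrow> f (cls n q x) = cls n p y
              \<longrightarrow> f (cls n q (smult c x)) = cls n p (smult c y))"

end

theory Submission
  imports Defs
begin

(* Each of the three maps is induced by an automorphism of the path algebra kQ that sends a path r
   to w(r) times its image under a quiver automorphism: the identity with w(r) the product of the
   alpha_i over the arrows a_i of r, the rotation i -> i+1, or the reflection e_i -> e_(-i) that
   exchanges the arrows a and a^*.  In each case the automorphism maps the i-th defining relation
   of A_n(q) to a nonzero multiple of the sigma(i)-th relation of A_n(p) for a permutation sigma of
   the indices, so it carries the ideal of relations onto the ideal of relations and descends to
   an isomorphism of the quotients. *)

section \<open>Quotients by corresponding ideals\<close>

lemma ring_hom_a_r_coset_image:
  assumes "F \<in> ring_hom R S" "I \<subseteq> carrier R" "x \<in> carrier R"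
  shows "F ` (I +>\<^bsub>R\<^esub> x) = F ` I +>\<^bsub>S\<^esub> F x"
proof -
  have "F ` (\<Union>h\<in>I. {h \<oplus>\<^bsub>R\<^esub> x}) = (\<Union>h\<in>I. {F h \<oplus>\<^bsub>S\<^esub> F x})"
    using assms ring_hom_add by (fastforce simp: subset_iff)
  then show ?thesis
    unfolding a_r_coset_def' by blast
qed

lemma carrier_FactRing: "carrier (R Quot I) = (\<lambda>x. I +>\<^bsub>R\<^esub> x) ` carrier R"
  unfolding FactRing_def A_RCOSETS_def' by auto

lemma ring_hom_FactRing_image:
  assumes I: "ideal I R" and J: "ideal J S"
    and F: "F \<in> ring_hom R S" and FI: "F ` I = J"
  shows "(\<lambda>X. F ` X) \<in> ring_hom (R Quot I) (S Quot J)"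
proof -
  interpret I: ideal I R by (rule I)
  interpret J: ideal J S by (rule J)
  have F_closed: "F x \<in> carrier S" if "x \<in> carrier R" for x
    using F that by (rule ring_hom_closed)
  have coset: "F ` (I +>\<^bsub>R\<^esub> x) = J +>\<^bsub>S\<^esub> F x" if "x \<in> carrier R" for x
    using ring_hom_a_r_coset_image[OF F I.a_subset that] FI by simp
  show ?thesis
  proof (rule ring_hom_memI)
    fix X Y assume "X \<in> carrier (R Quot I)" "Y \<in> carrier (R Quot I)"
    then obtain x y where xy: "x \<in> carrier R" "y \<in> carrier R" "X = I +>\<^bsub>R\<^esub> x" "Y = I +>\<^bsub>R\<^esub> y"
      by (auto simp: carrier_FactRing)
    show "F ` X \<in> carrier (S Quot J)"
      using xy coset F_closed by (auto simp: carrier_FactRing)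
    have "F ` (X \<otimes>\<^bsub>R Quot I\<^esub> Y) = F ` (I +>\<^bsub>R\<^esub> x \<otimes>\<^bsub>R\<^esub> y)"
      using xy ring_hom_mult[OF I.rcos_ring_hom] by simp
    also have "\<dots> = J +>\<^bsub>S\<^esub> F x \<otimes>\<^bsub>S\<^esub> F y"
      using xy coset ring_hom_mult[OF F] by simp
    also have "\<dots> = F ` X \<otimes>\<^bsub>S Quot J\<^esub> F ` Y"
      using xy coset F_closed ring_hom_mult[OF J.rcos_ring_hom] by simp
    finally show "F ` (X \<otimes>\<^bsub>R Quot I\<^esub> Y) = F ` X \<otimes>\<^bsub>S Quot J\<^esub> F ` Y" .
    have "F ` (X \<oplus>\<^bsub>R Quot I\<^esub> Y) = F ` (I +>\<^bsub>R\<^esub> x \<oplus>\<^bsub>R\<^esub> y)"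
      using xy ring_hom_add[OF I.rcos_ring_hom] by simp
    also have "\<dots> = J +>\<^bsub>S\<^esub> F x \<oplus>\<^bsub>S\<^esub> F y"
      using xy coset ring_hom_add[OF F] by simp
    also have "\<dots> = F ` X \<oplus>\<^bsub>S Quot J\<^esub> F ` Y"
      using xy coset F_closed ring_hom_add[OF J.rcos_ring_hom] by simp
    finally show "F ` (X \<oplus>\<^bsub>R Quot I\<^esub> Y) = F ` X \<oplus>\<^bsub>S Quot J\<^esub> F ` Y" .
  next
    show "F ` \<one>\<^bsub>R Quot I\<^esub> = \<one>\<^bsub>S Quot J\<^esub>"
      using coset ring_hom_one[OF F] by (simp add: FactRing_def)
  qed
qed

lemma ring_iso_FactRing_image:
  assumes I: "ideal I R" and J: "ideal J S"
    and F: "F \<in> ring_iso R S" and FI: "F ` I = J"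
  shows "(\<lambda>X. F ` X) \<in> ring_iso (R Quot I) (S Quot J)"
proof -
  interpret I: ideal I R by (rule I)
  have hom: "F \<in> ring_hom R S" and bij: "bij_betw F (carrier R) (carrier S)"
    using F by (auto simp: ring_iso_def)
  have "bij_betw (\<lambda>X. F ` X) (carrier (R Quot I)) (carrier (S Quot J))"
  proof (rule bij_betw_imageI)
    have "X \<subseteq> carrier R" if "X \<in> carrier (R Quot I)" for X
      using that I.a_r_coset_subset_G I.a_subset by (auto simp: carrier_FactRing)
    then show "inj_on (\<lambda>X. F ` X) (carrier (R Quot I))"
      using bij by (auto simp: bij_betw_def inj_on_def inj_on_image_eq_iff)
    have "(\<lambda>X. F ` X) ` carrier (R Quot I) = (\<lambda>x. J +>\<^bsub>S\<^esub> F x) ` carrier R"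
      using ring_hom_a_r_coset_image[OF hom I.a_subset] FI by (auto simp: carrier_FactRing image_image)
    also have "\<dots> = carrier (S Quot J)"
      using bij by (metis bij_betw_imp_surj_on carrier_FactRing image_image)
    finally show "(\<lambda>X. F ` X) ` carrier (R Quot I) = carrier (S Quot J)" .
  qed
  then show ?thesis
    using ring_hom_FactRing_image[OF I J hom FI] by (simp add: ring_iso_def)
qed

lemma ring_hom_genideal_image:
  assumes R: "ring R" and S: "ring S"
    and F: "F \<in> ring_hom R S" and G: "G \<in> ring_hom S R"
    and FG: "\<And>y. y \<in> carrier S \<Longrightarrow> F (G y) = y"
    and A: "A \<subseteq> carrier R" and B: "B \<subseteq> carrier S"
    and FA: "F ` A \<subseteq> genideal S B" and GB: "G ` B \<subseteq> genideal R A"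
  shows "F ` genideal R A = genideal S B"
proof
  interpret R: ring R by (rule R)
  interpret S: ring S by (rule S)
  interpret F: ring_hom_ring R S F using R S F by (rule ring_hom_ringI2)
  interpret G: ring_hom_ring S R G using S R G by (rule ring_hom_ringI2)
  have "genideal R A \<subseteq> {x \<in> carrier R. F x \<in> genideal S B}"
    by (rule R.genideal_minimal[OF F.ideal_vimage[OF S.genideal_ideal[OF B]]]) (use A FA in auto)
  then show "F ` genideal R A \<subseteq> genideal S B" by auto
  have "genideal S B \<subseteq> {y \<in> carrier S. G y \<in> genideal R A}"
    by (rule S.genideal_minimal[OF G.ideal_vimage[OF R.genideal_ideal[OF A]]]) (use B GB in auto)
  then show "genideal S B \<subseteq> F ` genideal R A"
    using FG by force
qed

section \<open>Relabelling paths\<close>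

fun relabel :: "(nat \<Rightarrow> nat) \<Rightarrow> (arr \<Rightarrow> arr) \<Rightarrow> path \<Rightarrow> path" where
  "relabel h \<gamma> (Triv v) = Triv (h v)"
| "relabel h \<gamma> (Pth xs) = Pth (map \<gamma> xs)"

definition quiver_map :: "nat \<Rightarrow> (nat \<Rightarrow> nat) \<Rightarrow> (arr \<Rightarrow> arr) \<Rightarrow> bool" where
  "quiver_map n h \<gamma> \<longleftrightarrow> (\<forall>v<n. h v < n) \<and>
     (\<forall>x. aidx x < n \<longrightarrow> aidx (\<gamma> x) < n \<and> asrc n (\<gamma> x) = h (asrc n x) \<and> atgt n (\<gamma> x) = h (atgt n x))"

definition quiver_left_inverse ::
    "nat \<Rightarrow> (nat \<Rightarrow> nat) \<Rightarrow> (arr \<Rightarrow> arr) \<Rightarrow> (nat \<Rightarrow> nat) \<Rightarrow> (arr \<Rightarrow> arr) \<Rightarrow> bool" where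
  "quiver_left_inverse n h \<gamma> h' \<gamma>' \<longleftrightarrow> (\<forall>v<n. h' (h v) = v) \<and> (\<forall>x. aidx x < n \<longrightarrow> \<gamma>' (\<gamma> x) = x)"

lemma all_arr_iff: "(\<forall>x. aidx x < n \<longrightarrow> P x) \<longleftrightarrow> (\<forall>i<n. P (Arr i) \<and> P (Star i))"
  by (metis aidx.simps arr.exhaust)

lemma asrc_atgt_less: "aidx x < n \<Longrightarrow> asrc n x < n \<and> atgt n x < n"
  by (cases x) auto

lemma valid_path_ends_less: "valid_path n r \<Longrightarrow> psrc n r < n \<and> ptgt n r < n"
  by (cases r) (auto simp: asrc_atgt_less)

lemma valid_path_relabel:
  assumes "quiver_map n h \<gamma>" "valid_path n r"
  shows "valid_path n (relabel h \<gamma> r)"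
  using assms by (cases r) (auto simp: quiver_map_def nth_mem)

lemma relabel_left_inverse:
  assumes "quiver_left_inverse n h \<gamma> h' \<gamma>'" "valid_path n r"
  shows "relabel h' \<gamma>' (relabel h \<gamma> r) = r"
  using assms by (cases r) (auto simp: quiver_left_inverse_def intro!: map_idI)

lemma relabel_ends:
  assumes "quiver_map n h \<gamma>" "valid_path n r"
  shows "psrc n (relabel h \<gamma> r) = h (psrc n r)" "ptgt n (relabel h \<gamma> r) = h (ptgt n r)"
  using assms by (cases r; auto simp: quiver_map_def hd_map last_map)+

lemma pconcat_relabel:
  assumes "quiver_map n h \<gamma>" "quiver_left_inverse n h \<gamma> h' \<gamma>'"
    and "valid_path n a" "valid_path n b"
  shows "pconcat n (relabel h \<gamma> a) (relabel h \<gamma> b) = map_option (relabel h \<gamma>) (pconcat n a b)"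
proof -
  have "h u = h v \<longleftrightarrow> u = v" if "u < n" "v < n" for u v
    using assms(2) that unfolding quiver_left_inverse_def by metis
  then have "ptgt n (relabel h \<gamma> a) = psrc n (relabel h \<gamma> b) \<longleftrightarrow> ptgt n a = psrc n b"
    using assms by (simp add: relabel_ends valid_path_ends_less)
  then show ?thesis
    unfolding pconcat_def by (cases a; cases b) auto
qed

lemma valid_path_pconcat:
  assumes a: "valid_path n a" and b: "valid_path n b" and c: "pconcat n a b = Some c"
  shows "valid_path n c"
proof (cases "\<exists>xs ys. a = Pth xs \<and> b = Pth ys")
  case True
  then obtain xs ys where xs: "a = Pth xs" and ys: "b = Pth ys" by blast
  have c_eq: "c = Pth (xs @ ys)" and seam: "atgt n (last xs) = asrc n (hd ys)"
    using c unfolding xs ys pconcat_def by (auto split: if_splits)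
  have "atgt n ((xs @ ys) ! j) = asrc n ((xs @ ys) ! Suc j)" if "Suc j < length (xs @ ys)" for j
  proof -
    consider "Suc j < length xs" | "Suc j = length xs" | "Suc j > length xs" by linarith
    then show ?thesis
    proof cases
      case 1
      then show ?thesis using a xs by (simp add: nth_append)
    next
      case 2
      then have "j = length xs - 1" by simp
      then show ?thesis using a b xs ys seam
        by (simp add: nth_append last_conv_nth hd_conv_nth)
    next
      case 3
      then have "Suc (j - length xs) < length ys" "Suc j - length xs = Suc (j - length xs)"
        using that by auto
      then show ?thesis using 3 b ys by (simp add: nth_append)
    qed
  qed
  then show ?thesis using a b xs ys c_eq by auto
next
  case False
  then show ?thesis
    using a b c unfolding pconcat_def by (cases a; cases b) (auto split: if_splits)
qed

section \<open>Weighted relabellings of the path algebra\<close>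

lemma kQ_simps [simp]:
  "carrier (kQ n) = KQ n" "mult (kQ n) = pmul n" "one (kQ n) = pone n"
  "zero (kQ n) = (\<lambda>_. 0)" "add (kQ n) = (\<lambda>x y r. x r + y r)"
  by (simp_all add: kQ_def)

lemma KQ_valid_path: "x \<in> KQ n \<Longrightarrow> x r \<noteq> 0 \<Longrightarrow> valid_path n r"
  by (auto simp: KQ_def)

lemma KQ_finite_support: "x \<in> KQ n \<Longrightarrow> finite {r. x r \<noteq> 0}"
  by (auto simp: KQ_def)

lemma pth_in_KQ: "valid_path n p \<Longrightarrow> pth p \<in> KQ n"
  by (auto simp: KQ_def pth_def)

lemma ee_in_KQ: "i < n \<Longrightarrow> ee i \<in> KQ n"
  and aa_in_KQ: "i < n \<Longrightarrow> aa i \<in> KQ n"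
  and ast_in_KQ: "i < n \<Longrightarrow> ast i \<in> KQ n"
  by (simp_all add: ee_def aa_def ast_def pth_in_KQ)

lemma smult_in_KQ: "x \<in> KQ n \<Longrightarrow> smult c x \<in> KQ n"
  by (auto simp: KQ_def smult_def elim: rev_finite_subset)

lemma smult_one [simp]: "smult 1 x = x"
  by (simp add: smult_def)

lemma smult_smult [simp]: "smult c (smult d x) = smult (c * d) x"
  by (simp add: smult_def mult.assoc)

lemma pmul_smult_left: "pmul n (smult c x) y = smult c (pmul n x y)"
proof (cases "c = 0")
  case False
  then have "{(p, s). smult c x p \<noteq> 0 \<and> y s \<noteq> 0 \<and> pconcat n p s = Some r}
      = {(p, s). x p \<noteq> 0 \<and> y s \<noteq> 0 \<and> pconcat n p s = Some r}" for r
    by (auto simp: smult_def)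
  then show ?thesis
    by (simp add: pmul_def smult_def fun_eq_iff sum_distrib_left case_prod_unfold mult.assoc)
qed (simp add: pmul_def smult_def fun_eq_iff)

lemma pmul_smult_right: "pmul n x (smult c y) = smult c (pmul n x y)"
proof (cases "c = 0")
  case False
  then have "{(p, s). x p \<noteq> 0 \<and> smult c y s \<noteq> 0 \<and> pconcat n p s = Some r}
      = {(p, s). x p \<noteq> 0 \<and> y s \<noteq> 0 \<and> pconcat n p s = Some r}" for r
    by (auto simp: smult_def)
  then show ?thesis
    by (simp add: pmul_def smult_def fun_eq_iff sum_distrib_left case_prod_unfold algebra_simps)
qed (simp add: pmul_def smult_def fun_eq_iff)

lemma pmul_eq_0_if_not_valid_path:
  assumes "x \<in> KQ n" "y \<in> KQ n" "\<not> valid_path n r"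
  shows "pmul n x y r = 0"
proof -
  have "\<not> (x a \<noteq> 0 \<and> y b \<noteq> 0 \<and> pconcat n a b = Some r)" for a b
    using assms KQ_valid_path[of x n a] KQ_valid_path[of y n b] valid_path_pconcat[of n a b r] by blast
  then have "{(a, b). x a \<noteq> 0 \<and> y b \<noteq> 0 \<and> pconcat n a b = Some r} = {}"
    by blast
  then show ?thesis
    by (simp only: pmul_def sum.empty)
qed

definition pullback :: "nat \<Rightarrow> (path \<Rightarrow> path) \<Rightarrow> (path \<Rightarrow> 'k::field) \<Rightarrow> (path \<Rightarrow> 'k) \<Rightarrow> path \<Rightarrow> 'k" where
  "pullback n g w x = (\<lambda>r. if valid_path n r then w r * x (g r) else 0)"

lemma pullback_in_KQ:
  assumes inv: "\<And>r. valid_path n r \<Longrightarrow> f (g r) = r" and x: "x \<in> KQ n"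
  shows "pullback n g w x \<in> KQ n"
proof -
  have "{r. pullback n g w x r \<noteq> 0} \<subseteq> f ` {s. x s \<noteq> 0}"
    using inv by (force simp: pullback_def split: if_splits)
  then have "finite {r. pullback n g w x r \<noteq> 0}"
    using KQ_finite_support[OF x] by (rule finite_subset[OF _ finite_imageI])
  then show ?thesis
    by (auto simp: KQ_def pullback_def)
qed

lemma pullback_add: "pullback n g w (\<lambda>r. x r + y r) = (\<lambda>r. pullback n g w x r + pullback n g w y r)"
  and pullback_diff_smult:
    "pullback n g w (\<lambda>r. x r - c * y r) = (\<lambda>r. pullback n g w x r - c * pullback n g w y r)"
  and pullback_smult: "pullback n g w (smult c x) = smult c (pullback n g w x)"
  by (auto simp: pullback_def smult_def fun_eq_iff algebra_simps)

locale path_automorphism =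
  fixes n :: nat and h :: "nat \<Rightarrow> nat" and \<gamma> :: "arr \<Rightarrow> arr"
    and h' :: "nat \<Rightarrow> nat" and \<gamma>' :: "arr \<Rightarrow> arr" and w :: "path \<Rightarrow> 'k::field"
  assumes quiver_map: "quiver_map n h \<gamma>" and quiver_map': "quiver_map n h' \<gamma>'"
    and left_inverse: "quiver_left_inverse n h \<gamma> h' \<gamma>'"
    and right_inverse: "quiver_left_inverse n h' \<gamma>' h \<gamma>"
    and weight_nonzero: "\<And>r. valid_path n r \<Longrightarrow> w r \<noteq> 0"
    and weight_pconcat:
      "\<And>a b c. valid_path n a \<Longrightarrow> valid_path n b \<Longrightarrow> pconcat n a b = Some c \<Longrightarrow> w c = w a * w b"
    and weight_Triv: "\<And>v. v < n \<Longrightarrow> w (Triv v) = 1"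
begin

abbreviation \<Phi> :: "(path \<Rightarrow> 'k) \<Rightarrow> path \<Rightarrow> 'k" where
  "\<Phi> \<equiv> pullback n (relabel h' \<gamma>') w"

abbreviation \<Psi> :: "(path \<Rightarrow> 'k) \<Rightarrow> path \<Rightarrow> 'k" where
  "\<Psi> \<equiv> pullback n (relabel h \<gamma>) (\<lambda>s. inverse (w (relabel h \<gamma> s)))"

lemma valid_path_relabels:
  "valid_path n r \<Longrightarrow> valid_path n (relabel h \<gamma> r)"
  "valid_path n r \<Longrightarrow> valid_path n (relabel h' \<gamma>' r)"
  using quiver_map quiver_map' by (simp_all add: valid_path_relabel)

lemma relabel_inverse:
  "valid_path n r \<Longrightarrow> relabel h' \<gamma>' (relabel h \<gamma> r) = r"
  "valid_path n r \<Longrightarrow> relabel h \<gamma> (relabel h' \<gamma>' r) = r"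
  using left_inverse right_inverse by (simp_all add: relabel_left_inverse)

lemma Phi_in_KQ: "x \<in> KQ n \<Longrightarrow> \<Phi> x \<in> KQ n"
  and Psi_in_KQ: "x \<in> KQ n \<Longrightarrow> \<Psi> x \<in> KQ n"
  using pullback_in_KQ relabel_inverse by blast+

lemma Phi_Psi: "x \<in> KQ n \<Longrightarrow> \<Phi> (\<Psi> x) = x"
  and Psi_Phi: "x \<in> KQ n \<Longrightarrow> \<Psi> (\<Phi> x) = x"
  by (auto simp: pullback_def fun_eq_iff valid_path_relabels relabel_inverse weight_nonzero
      dest: KQ_valid_path)

lemma Phi_pth: "valid_path n s \<Longrightarrow> \<Phi> (pth s) = smult (w (relabel h \<gamma> s)) (pth (relabel h \<gamma> s))"
  by (auto simp: pullback_def fun_eq_iff smult_def pth_def valid_path_relabels relabel_inverse)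

lemma Phi_one: "\<Phi> (pone n) = pone n"
proof
  fix r
  have "h' v < n" if "v < n" for v
    using quiver_map' that by (simp add: quiver_map_def)
  then show "\<Phi> (pone n) r = pone n r"
    by (cases r) (auto simp: pullback_def pone_def weight_Triv)
qed

lemma pconcat_relabel_iff:
  assumes "valid_path n a" "valid_path n b" "valid_path n c"
  shows "pconcat n (relabel h \<gamma> a) (relabel h \<gamma> b) = Some (relabel h \<gamma> c) \<longleftrightarrow> pconcat n a b = Some c"
proof (cases "pconcat n a b")
  case (Some c')
  then have "valid_path n c'"
    using assms valid_path_pconcat by blast
  then have "relabel h \<gamma> c' = relabel h \<gamma> c \<longleftrightarrow> c' = c"
    using assms(3) relabel_inverse(1) by metis
  then show ?thesis
    by (simp add: assms Some pconcat_relabel[OF quiver_map left_inverse])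
qed (simp add: assms pconcat_relabel[OF quiver_map left_inverse])

lemma Phi_pmul:
  assumes x: "x \<in> KQ n" and y: "y \<in> KQ n"
  shows "\<Phi> (pmul n x y) = pmul n (\<Phi> x) (\<Phi> y)"
proof
  fix r
  let ?M = "relabel h \<gamma>" and ?g = "relabel h' \<gamma>'"
  let ?S = "{(a, b). \<Phi> x a \<noteq> 0 \<and> \<Phi> y b \<noteq> 0 \<and> pconcat n a b = Some r}"
  let ?T = "{(c, d). x c \<noteq> 0 \<and> y d \<noteq> 0 \<and> pconcat n c d = Some (?g r)}"
  show "\<Phi> (pmul n x y) r = pmul n (\<Phi> x) (\<Phi> y) r"
  proof (cases "valid_path n r")
    case False
    then show ?thesis
      using pmul_eq_0_if_not_valid_path[OF Phi_in_KQ[OF x] Phi_in_KQ[OF y]] by (simp add: pullback_def)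
  next
    case r: True
    have "(\<Sum>(a, b)\<in>?S. \<Phi> x a * \<Phi> y b) = (\<Sum>(c, d)\<in>?T. w r * (x c * y d))"
    proof (rule sum.reindex_bij_witness[where i = "\<lambda>(c, d). (?M c, ?M d)" and j = "\<lambda>(a, b). (?g a, ?g b)"])
      fix ab assume "ab \<in> ?S"
      then obtain a b where ab: "ab = (a, b)" "valid_path n a" "valid_path n b"
          "x (?g a) \<noteq> 0" "y (?g b) \<noteq> 0" "pconcat n a b = Some r"
        by (auto simp: pullback_def split: if_splits)
      then have "pconcat n (?g a) (?g b) = Some (?g r)"
        using r pconcat_relabel_iff valid_path_relabels relabel_inverse by metis
      moreover have "w r = w a * w b"
        using ab weight_pconcat by blast
      ultimately show "(\<lambda>(a, b). (?g a, ?g b)) ab \<in> ?T"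
          "(\<lambda>(c, d). (?M c, ?M d)) ((\<lambda>(a, b). (?g a, ?g b)) ab) = ab"
          "(\<lambda>(c, d). w r * (x c * y d)) ((\<lambda>(a, b). (?g a, ?g b)) ab) = (\<lambda>(a, b). \<Phi> x a * \<Phi> y b) ab"
        using ab by (simp_all add: relabel_inverse pullback_def)
    next
      fix cd assume "cd \<in> ?T"
      then obtain c d where cd: "cd = (c, d)" "valid_path n c" "valid_path n d"
          "x c \<noteq> 0" "y d \<noteq> 0" "pconcat n c d = Some (?g r)"
        using x y KQ_valid_path by blast
      then have "pconcat n (?M c) (?M d) = Some r"
        using r pconcat_relabel_iff valid_path_relabels relabel_inverse by metis
      then show "(\<lambda>(a, b). (?g a, ?g b)) ((\<lambda>(c, d). (?M c, ?M d)) cd) = cd"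
          "(\<lambda>(c, d). (?M c, ?M d)) cd \<in> ?S"
        using cd by (simp_all add: relabel_inverse valid_path_relabels pullback_def weight_nonzero)
    qed
    then show ?thesis
      using r by (simp add: pullback_def pmul_def sum_distrib_left case_prod_unfold)
  qed
qed

lemma Phi_ring_iso: "\<Phi> \<in> ring_iso (kQ n) (kQ n)"
proof -
  have "\<Phi> \<in> ring_hom (kQ n) (kQ n)"
    by (rule ring_hom_memI) (simp_all add: Phi_in_KQ Phi_pmul Phi_one pullback_add)
  moreover have "bij_betw \<Phi> (KQ n) (KQ n)"
    by (rule bij_betw_byWitness[where f' = \<Psi>]) (auto simp: Phi_Psi Psi_Phi Phi_in_KQ Psi_in_KQ)
  ultimately show ?thesis
    by (simp add: ring_iso_def)
qed

lemma path_automorphism_inverse: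
  "path_automorphism n h' \<gamma>' h \<gamma> (\<lambda>s. inverse (w (relabel h \<gamma> s)))"
proof
  fix a b c assume abc: "valid_path n a" "valid_path n b" "pconcat n a b = Some c"
  then have "valid_path n c"
    by (rule valid_path_pconcat)
  then show "inverse (w (relabel h \<gamma> c)) = inverse (w (relabel h \<gamma> a)) * inverse (w (relabel h \<gamma> b))"
    using abc pconcat_relabel_iff weight_pconcat valid_path_relabels
    by (metis inverse_mult_distrib)
qed (use quiver_map quiver_map' left_inverse right_inverse weight_nonzero weight_Triv
      valid_path_relabels in \<open>auto simp: quiver_map_def\<close>)

end

definition pred_mod :: "nat \<Rightarrow> nat \<Rightarrow> nat" where
  "pred_mod n i = (i + n - 1) mod n"

definition succ_mod :: "nat \<Rightarrow> nat \<Rightarrow> nat" where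
  "succ_mod n i = Suc i mod n"

definition neg_mod :: "nat \<Rightarrow> nat \<Rightarrow> nat" where
  "neg_mod n v = (n - v) mod n"

(* Agrees with -(i + 1) mod n only for i < n, the only arguments it is used at. *)
definition neg_succ_mod :: "nat \<Rightarrow> nat \<Rightarrow> nat" where
  "neg_succ_mod n i = n - i - 1"

lemma lessThan_image_eq:
  assumes "\<And>i. i < n \<Longrightarrow> f i < n" "\<And>j. j < n \<Longrightarrow> g j < n" "\<And>j. j < n \<Longrightarrow> f (g j) = j"
  shows "f ` {..<n} = {..<n}"
proof (intro subset_antisym image_subsetI subsetI)
  show "f i \<in> {..<n}" if "i \<in> {..<n}" for i
    using assms(1) that by simp
  show "j \<in> f ` {..<n}" if "j \<in> {..<n}" for j
    using assms(2,3) that by (metis image_eqI lessThan_iff)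
qed

lemma pred_mod_eq: "i < n \<Longrightarrow> pred_mod n i = (if i = 0 then n - 1 else i - 1)"
  by (cases i) (auto simp: pred_mod_def)

lemma succ_mod_eq: "i < n \<Longrightarrow> succ_mod n i = (if Suc i = n then 0 else Suc i)"
  by (auto simp: succ_mod_def)

lemma neg_mod_eq: "v < n \<Longrightarrow> neg_mod n v = (if v = 0 then 0 else n - v)"
  by (auto simp: neg_mod_def)

lemma pred_mod_less: "i < n \<Longrightarrow> pred_mod n i < n"
  and succ_mod_less: "i < n \<Longrightarrow> succ_mod n i < n"
  and neg_mod_less: "i < n \<Longrightarrow> neg_mod n i < n"
  and neg_succ_mod_less: "i < n \<Longrightarrow> neg_succ_mod n i < n"
  by (simp_all add: pred_mod_def succ_mod_def neg_mod_def neg_succ_mod_def)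

lemma pred_mod_succ_mod: "i < n \<Longrightarrow> pred_mod n (succ_mod n i) = i"
  and succ_mod_pred_mod: "i < n \<Longrightarrow> succ_mod n (pred_mod n i) = i"
  by (auto simp: pred_mod_eq succ_mod_eq succ_mod_less pred_mod_less)

lemma neg_mod_neg_mod: "i < n \<Longrightarrow> neg_mod n (neg_mod n i) = i"
  and neg_succ_mod_neg_succ_mod: "i < n \<Longrightarrow> neg_succ_mod n (neg_succ_mod n i) = i"
  and succ_mod_neg_succ_mod: "i < n \<Longrightarrow> succ_mod n (neg_succ_mod n i) = neg_mod n i"
  and neg_mod_succ_mod: "i < n \<Longrightarrow> neg_mod n (succ_mod n i) = neg_succ_mod n i"
  and neg_succ_mod_pred_mod: "i < n \<Longrightarrow> neg_succ_mod n (pred_mod n i) = neg_mod n i"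
  and pred_mod_neg_mod: "i < n \<Longrightarrow> pred_mod n (neg_mod n i) = neg_succ_mod n i"
  by (auto simp: neg_mod_eq succ_mod_eq pred_mod_eq neg_mod_less neg_succ_mod_def)

section \<open>The defining relations\<close>

definition qrel :: "nat \<Rightarrow> (nat \<Rightarrow> 'k::field) \<Rightarrow> nat \<Rightarrow> path \<Rightarrow> 'k" where
  "qrel n q i = (\<lambda>r. pmul n (aa i) (ast i) r - q i * pmul n (ast (pred_mod n i)) (aa (pred_mod n i)) r)"

lemma rels_eq_qrel_image: "rels n q = qrel n q ` {..<n}"
  by (auto simp: rels_def qrel_def pred_mod_def)

lemma relideal_eq_UNIV_if_not_ring:
  assumes "\<not> ring (kQ n :: (path \<Rightarrow> 'k::field) ring)"
  shows "relideal n (q :: nat \<Rightarrow> 'k) = UNIV"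
  using assms by (auto simp: relideal_def genideal_def dest: ideal.axioms(2))

lemma cls_eq_UNIV_if_not_ring:
  assumes "\<not> ring (kQ n :: (path \<Rightarrow> 'k::field) ring)"
  shows "cls n q (x :: path \<Rightarrow> 'k) = UNIV"
proof -
  have "z \<in> UNIV +>\<^bsub>kQ n\<^esub> x" for z :: "path \<Rightarrow> 'k"
  proof -
    have "z = (\<lambda>r. z r - x r) \<oplus>\<^bsub>kQ n\<^esub> x" by (simp add: fun_eq_iff)
    then show ?thesis unfolding a_r_coset_def' by blast
  qed
  then show ?thesis
    using assms by (auto simp: cls_def relideal_eq_UNIV_if_not_ring)
qed

lemma alg_iso_if_not_ring:
  assumes "\<not> ring (kQ n :: (path \<Rightarrow> 'k::field) ring)"
  shows "\<exists>f. alg_iso n q p f \<and> (\<forall>x\<in>A. f (cls n q x) = cls n p (g x :: path \<Rightarrow> 'k))"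
proof -
  have "Aq n q = Aq n p"
    using assms by (simp add: Aq_def relideal_eq_UNIV_if_not_ring)
  then have "id \<in> ring_iso (Aq n q) (Aq n p)"
    by (metis ring_iso_set_refl)
  then show ?thesis
    using assms by (intro exI[of _ id]) (simp add: alg_iso_def cls_eq_UNIV_if_not_ring)
qed

context
  fixes n :: nat
  assumes kQ_ring: "ring (kQ n :: (path \<Rightarrow> 'k::field) ring)"
begin

interpretation kQ: ring "kQ n :: (path \<Rightarrow> 'k) ring"
  by (rule kQ_ring)

lemma pone_in_KQ: "(pone n :: path \<Rightarrow> 'k) \<in> KQ n"
  using kQ.one_closed by simp

lemma pmul_in_KQ: "x \<in> KQ n \<Longrightarrow> y \<in> KQ n \<Longrightarrow> (pmul n x y :: path \<Rightarrow> 'k) \<in> KQ n"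
  using kQ.m_closed by simp

lemma add_in_KQ: "x \<in> KQ n \<Longrightarrow> y \<in> KQ n \<Longrightarrow> ((\<lambda>r. x r + y r) :: path \<Rightarrow> 'k) \<in> KQ n"
  using kQ.a_closed by simp

lemma smult_eq_pmul: "(z :: path \<Rightarrow> 'k) \<in> KQ n \<Longrightarrow> smult c z = pmul n (smult c (pone n)) z"
  using kQ.l_one[of z] by (simp add: pmul_smult_left)

lemma qrel_in_KQ: "i < n \<Longrightarrow> (qrel n q i :: path \<Rightarrow> 'k) \<in> KQ n"
proof -
  assume i: "i < n"
  have "qrel n q i = (\<lambda>r. pmul n (aa i) (ast i) r
      + smult (- q i) (pmul n (ast (pred_mod n i)) (aa (pred_mod n i))) r)"
    by (simp add: qrel_def smult_def fun_eq_iff)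
  then show ?thesis
    using i by (simp add: add_in_KQ smult_in_KQ pmul_in_KQ aa_in_KQ ast_in_KQ pred_mod_less)
qed

lemma ideal_relideal: "ideal (relideal n q) (kQ n :: (path \<Rightarrow> 'k) ring)"
  unfolding relideal_def rels_eq_qrel_image
  by (rule kQ.genideal_ideal) (auto simp: qrel_in_KQ)

lemma smult_mem_ideal:
  assumes "ideal I (kQ n)" "(z :: path \<Rightarrow> 'k) \<in> I"
  shows "smult c z \<in> I"
  using assms smult_eq_pmul[OF ideal.Icarr[OF assms, simplified]] ideal.I_l_closed[OF assms]
    smult_in_KQ[OF pone_in_KQ] by simp

lemma smult_qrel_in_relideal: "i < n \<Longrightarrow> smult c (qrel n q i :: path \<Rightarrow> 'k) \<in> relideal n q"
proof -
  assume "i < n"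
  moreover have "qrel n q ` {..<n} \<subseteq> genideal (kQ n) (qrel n q ` {..<n})"
    by (rule kQ.genideal_self) (auto simp: qrel_in_KQ)
  ultimately show ?thesis
    using smult_mem_ideal[OF ideal_relideal] unfolding relideal_def rels_eq_qrel_image by blast
qed

lemma cls_smult_cong:
  assumes "x \<in> KQ n" "y \<in> KQ n" "cls n q x = cls n q (y :: path \<Rightarrow> 'k)"
  shows "cls n q (smult c x) = cls n q (smult c y)"
proof -
  interpret I: ideal "relideal n q" "kQ n :: (path \<Rightarrow> 'k) ring"
    by (rule ideal_relideal)
  have "smult c z = pmul n (smult c (pone n)) z" if "z \<in> KQ n" for z
    using that by (rule smult_eq_pmul)
  then show ?thesis
    using assms ring_hom_mult[OF I.rcos_ring_hom, of "smult c (pone n)"] smult_in_KQ[OF pone_in_KQ]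
    by (simp add: cls_def FactRing_def)
qed

end

context path_automorphism
begin

lemma Phi_qrel:
  assumes "i < n"
  shows "\<Phi> (qrel n q i) = (\<lambda>r. pmul n (\<Phi> (aa i)) (\<Phi> (ast i)) r
      - q i * pmul n (\<Phi> (ast (pred_mod n i))) (\<Phi> (aa (pred_mod n i))) r)"
  using assms by (simp add: qrel_def pullback_diff_smult Phi_pmul aa_in_KQ ast_in_KQ pred_mod_less)

lemma Phi_relideal:
  assumes R: "ring (kQ n :: (path \<Rightarrow> 'k) ring)"
    and Phi_qrel_eq: "\<And>i. i < n \<Longrightarrow> \<Phi> (qrel n q i) = smult (c i) (qrel n p (\<sigma> i))"
    and \<sigma>_onto: "\<sigma> ` {..<n} = {..<n}"
    and c_nonzero: "\<And>i. i < n \<Longrightarrow> c i \<noteq> 0"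
  shows "\<Phi> ` relideal n q = relideal n p"
  unfolding relideal_def
proof (rule ring_hom_genideal_image[OF R R])
  interpret inverse: path_automorphism n h' \<gamma>' h \<gamma> "\<lambda>s. inverse (w (relabel h \<gamma> s))"
    by (rule path_automorphism_inverse)
  show "\<Phi> \<in> ring_hom (kQ n) (kQ n)" "\<Psi> \<in> ring_hom (kQ n) (kQ n)"
    using Phi_ring_iso inverse.Phi_ring_iso by (simp_all add: ring_iso_def)
  show "rels n q \<subseteq> carrier (kQ n)" "rels n p \<subseteq> carrier (kQ n)"
    using qrel_in_KQ[OF R] by (auto simp: rels_eq_qrel_image)
  have "\<sigma> i < n" if "i < n" for i
    using \<sigma>_onto that by blast
  then show "\<Phi> ` rels n q \<subseteq> genideal (kQ n) (rels n p)"
    using smult_qrel_in_relideal[OF R] by (auto simp: rels_eq_qrel_image Phi_qrel_eq relideal_def)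
  have "\<Psi> (qrel n p j) \<in> relideal n q" if "j < n" for j
  proof -
    have "j \<in> \<sigma> ` {..<n}"
      using \<sigma>_onto that by simp
    then obtain i where i: "i < n" "j = \<sigma> i"
      by blast
    then have "qrel n p j = smult (inverse (c i)) (\<Phi> (qrel n q i))"
      by (simp add: Phi_qrel_eq c_nonzero)
    then have "\<Psi> (qrel n p j) = smult (inverse (c i)) (qrel n q i)"
      using i by (simp add: pullback_smult Psi_Phi qrel_in_KQ[OF R])
    then show ?thesis
      using i smult_qrel_in_relideal[OF R] by simp
  qed
  then show "\<Psi> ` rels n p \<subseteq> genideal (kQ n) (rels n q)"
    by (auto simp: rels_eq_qrel_image relideal_def)
qed (simp add: Phi_Psi)

lemma induces_alg_iso:
  assumes Phi_qrel_eq: "\<And>i. i < n \<Longrightarrow> \<Phi> (qrel n q i) = smult (c i) (qrel n p (\<sigma> i))"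
    and \<sigma>_onto: "\<sigma> ` {..<n} = {..<n}"
    and c_nonzero: "\<And>i. i < n \<Longrightarrow> c i \<noteq> 0"
  shows "\<exists>f. alg_iso n q p f \<and> (\<forall>x\<in>KQ n. f (cls n q x) = cls n p (\<Phi> x))"
  \<comment> \<open>kQ is a ring, but associativity of pmul is never proved here: were it to fail, every
    ideal generated in kQ would be the whole type and both quotients would collapse.\<close>
proof (cases "ring (kQ n :: (path \<Rightarrow> 'k) ring)")
  case False
  then show ?thesis
    by (rule alg_iso_if_not_ring)
next
  case R: True
  have relideal_image: "\<Phi> ` relideal n q = relideal n p"
    using R assms by (rule Phi_relideal)
  have cls_image: "\<Phi> ` cls n q x = cls n p (\<Phi> x)" if "x \<in> KQ n" for x
    using ring_hom_a_r_coset_image[of \<Phi> "kQ n" "kQ n" "relideal n q" x] Phi_ring_iso that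
      ideal.Icarr[OF ideal_relideal[OF R]] relideal_image
    by (auto simp: cls_def ring_iso_def)
  have "(\<lambda>X. \<Phi> ` X) \<in> ring_iso (Aq n q) (Aq n p)"
    unfolding Aq_def
    by (rule ring_iso_FactRing_image[OF ideal_relideal[OF R] ideal_relideal[OF R] Phi_ring_iso relideal_image])
  moreover have "\<Phi> ` cls n q (smult a x) = cls n p (smult a y)"
    if xy: "x \<in> KQ n" "y \<in> KQ n" and eq: "\<Phi> ` cls n q x = cls n p y" for a x y
  proof -
    have "\<Phi> ` cls n q (smult a x) = cls n p (smult a (\<Phi> x))"
      using cls_image[OF smult_in_KQ[OF xy(1)]] by (simp add: pullback_smult)
    also have "\<dots> = cls n p (smult a y)"
      using cls_smult_cong[OF R Phi_in_KQ] xy eq cls_image by simp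
    finally show ?thesis .
  qed
  ultimately have "alg_iso n q p (\<lambda>X. \<Phi> ` X)"
    unfolding alg_iso_def by blast
  then show ?thesis
    using cls_image by blast
qed

lemma induces_alg_iso_on_generators:
  assumes "\<And>i. i < n \<Longrightarrow> \<Phi> (qrel n q i) = smult (c i) (qrel n p (\<sigma> i))"
    and "\<And>i. i < n \<Longrightarrow> \<Phi> (ee i) = E i"
    and "\<And>i. i < n \<Longrightarrow> \<Phi> (aa i) = A i"
    and "\<And>i. i < n \<Longrightarrow> \<Phi> (ast i) = A' i"
    and "\<sigma> ` {..<n} = {..<n}"
    and "\<And>i. i < n \<Longrightarrow> c i \<noteq> 0"
  shows "\<exists>f. alg_iso n q p f \<and>
    (\<forall>i<n. f (cls n q (ee i)) = cls n p (E i)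
       \<and> f (cls n q (aa i)) = cls n p (A i)
       \<and> f (cls n q (ast i)) = cls n p (A' i))"
  using induces_alg_iso[OF assms(1,5,6)] assms(2-4) by (auto simp: ee_in_KQ aa_in_KQ ast_in_KQ)

end

section \<open>The three isomorphisms\<close>

definition path_weight :: "(nat \<Rightarrow> 'k::field) \<Rightarrow> path \<Rightarrow> 'k" where
  "path_weight \<alpha> r = (case r of Triv _ \<Rightarrow> 1
     | Pth xs \<Rightarrow> (\<Prod>x\<leftarrow>xs. case x of Arr i \<Rightarrow> \<alpha> i | Star _ \<Rightarrow> 1))"

lemma quiver_map_id: "quiver_map n id id"
  and quiver_left_inverse_id: "quiver_left_inverse n id id id id"
  by (simp_all add: quiver_map_def quiver_left_inverse_def)

lemma path_automorphism_path_weight: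
  assumes "\<forall>i<n. \<alpha> i \<noteq> 0"
  shows "path_automorphism n id id id id (path_weight \<alpha>)"
proof
  show "path_weight \<alpha> r \<noteq> 0" if "valid_path n r" for r
    using assms that by (cases r) (auto simp: path_weight_def prod_list_zero_iff split: arr.splits)
  show "path_weight \<alpha> c = path_weight \<alpha> a * path_weight \<alpha> b" if "pconcat n a b = Some c" for a b c
    using that by (cases a; cases b) (auto simp: pconcat_def path_weight_def split: if_splits)
qed (simp_all add: quiver_map_id quiver_left_inverse_id path_weight_def)

lemma alg_iso_rescale:
  fixes q \<alpha> :: "nat \<Rightarrow> 'k::field"
  assumes \<alpha>: "\<forall>i<n. \<alpha> i \<noteq> 0"
  defines "p \<equiv> \<lambda>i. \<alpha> (pred_mod n i) / \<alpha> i * q i"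
  shows "\<exists>f. alg_iso n q p f \<and>
    (\<forall>i<n. f (cls n q (ee i)) = cls n p (ee i)
       \<and> f (cls n q (aa i)) = cls n p (smult (\<alpha> i) (aa i))
       \<and> f (cls n q (ast i)) = cls n p (ast i))"
proof -
  interpret path_automorphism n id id id id "path_weight \<alpha>"
    using \<alpha> by (rule path_automorphism_path_weight)
  have generators: "\<Phi> (ee i) = ee i" "\<Phi> (aa i) = smult (\<alpha> i) (aa i)" "\<Phi> (ast i) = ast i"
    if "i < n" for i
    using that Phi_pth by (simp_all add: ee_def aa_def ast_def path_weight_def)
  have relations: "\<Phi> (qrel n q i) = smult (\<alpha> i) (qrel n p (id i))" if "i < n" for i
    using that \<alpha> pred_mod_less[OF that]
    by (simp add: Phi_qrel generators pmul_smult_left pmul_smult_right)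
      (simp add: qrel_def p_def smult_def fun_eq_iff field_simps)
  show ?thesis
    by (rule induces_alg_iso_on_generators[OF relations generators]) (use \<alpha> in simp_all)
qed

fun shift_arr :: "(nat \<Rightarrow> nat) \<Rightarrow> arr \<Rightarrow> arr" where
  "shift_arr f (Arr i) = Arr (f i)"
| "shift_arr f (Star i) = Star (f i)"

fun reflect_arr :: "nat \<Rightarrow> arr \<Rightarrow> arr" where
  "reflect_arr n (Arr i) = Star (neg_succ_mod n i)"
| "reflect_arr n (Star i) = Arr (neg_succ_mod n i)"

lemma path_automorphism_rotate:
  "path_automorphism n (succ_mod n) (shift_arr (succ_mod n)) (pred_mod n) (shift_arr (pred_mod n)) (\<lambda>_. 1)"
proof
  show "quiver_map n (succ_mod n) (shift_arr (succ_mod n))"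
    "quiver_map n (pred_mod n) (shift_arr (pred_mod n))"
    by (auto simp: quiver_map_def succ_mod_less pred_mod_less pred_mod_succ_mod succ_mod_pred_mod
        all_arr_iff
        simp flip: succ_mod_def)
  show "quiver_left_inverse n (succ_mod n) (shift_arr (succ_mod n)) (pred_mod n) (shift_arr (pred_mod n))"
    "quiver_left_inverse n (pred_mod n) (shift_arr (pred_mod n)) (succ_mod n) (shift_arr (succ_mod n))"
    by (auto simp: quiver_left_inverse_def pred_mod_succ_mod succ_mod_pred_mod all_arr_iff
        simp flip: succ_mod_def)
qed simp_all

lemma path_automorphism_reflect:
  "path_automorphism n (neg_mod n) (reflect_arr n) (neg_mod n) (reflect_arr n) (\<lambda>_. 1)"
proof
  show "quiver_map n (neg_mod n) (reflect_arr n)"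
    by (auto simp: quiver_map_def neg_mod_less neg_succ_mod_less succ_mod_neg_succ_mod
        neg_mod_succ_mod all_arr_iff
        simp flip: succ_mod_def)
  show "quiver_left_inverse n (neg_mod n) (reflect_arr n) (neg_mod n) (reflect_arr n)"
    by (auto simp: quiver_left_inverse_def neg_mod_neg_mod neg_succ_mod_neg_succ_mod all_arr_iff
        simp flip: succ_mod_def)
qed simp_all

lemma alg_iso_rotate:
  fixes n :: nat and q :: "nat \<Rightarrow> 'k::field"
  defines "p \<equiv> \<lambda>i. q (pred_mod n i)"
  shows "\<exists>f. alg_iso n q p f \<and>
    (\<forall>i<n. f (cls n q (ee i)) = cls n p (ee (succ_mod n i))
       \<and> f (cls n q (aa i)) = cls n p (aa (succ_mod n i))
       \<and> f (cls n q (ast i)) = cls n p (ast (succ_mod n i)))"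
proof -
  interpret path_automorphism n "succ_mod n" "shift_arr (succ_mod n)" "pred_mod n" "shift_arr (pred_mod n)"
      "\<lambda>_. 1 :: 'k"
    by (rule path_automorphism_rotate)
  have generators: "\<Phi> (ee i) = ee (succ_mod n i)" "\<Phi> (aa i) = aa (succ_mod n i)"
      "\<Phi> (ast i) = ast (succ_mod n i)" if "i < n" for i
    using that Phi_pth by (simp_all add: ee_def aa_def ast_def)
  have relations: "\<Phi> (qrel n q i) = smult 1 (qrel n p (succ_mod n i))" if "i < n" for i
    using that pred_mod_less[OF that]
    by (simp add: Phi_qrel generators) (simp add: qrel_def p_def pred_mod_succ_mod succ_mod_pred_mod)
  have onto: "succ_mod n ` {..<n} = {..<n}"
    using succ_mod_less pred_mod_less succ_mod_pred_mod by (rule lessThan_image_eq)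
  show ?thesis
    by (rule induces_alg_iso_on_generators[OF relations generators onto]) simp_all
qed

lemma alg_iso_reflect:
  fixes n :: nat and q :: "nat \<Rightarrow> 'k::field"
  assumes q: "\<forall>i<n. q i \<noteq> 0"
  defines "p \<equiv> \<lambda>i. inverse (q (neg_mod n i))"
  shows "\<exists>f. alg_iso n q p f \<and>
    (\<forall>i<n. f (cls n q (ee i)) = cls n p (ee (neg_mod n i))
       \<and> f (cls n q (aa i)) = cls n p (ast (neg_succ_mod n i))
       \<and> f (cls n q (ast i)) = cls n p (aa (neg_succ_mod n i)))"
proof -
  interpret path_automorphism n "neg_mod n" "reflect_arr n" "neg_mod n" "reflect_arr n" "\<lambda>_. 1 :: 'k"
    by (rule path_automorphism_reflect)
  have generators: "\<Phi> (ee i) = ee (neg_mod n i)" "\<Phi> (aa i) = ast (neg_succ_mod n i)"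
      "\<Phi> (ast i) = aa (neg_succ_mod n i)" if "i < n" for i
    using that Phi_pth by (simp_all add: ee_def aa_def ast_def)
  have relations: "\<Phi> (qrel n q i) = smult (- q i) (qrel n p (neg_mod n i))" if "i < n" for i
    using that q pred_mod_less[OF that]
    by (simp add: Phi_qrel generators neg_succ_mod_pred_mod)
      (simp add: qrel_def p_def smult_def fun_eq_iff field_simps pred_mod_neg_mod neg_mod_neg_mod)
  have onto: "neg_mod n ` {..<n} = {..<n}"
    using neg_mod_less neg_mod_less neg_mod_neg_mod by (rule lessThan_image_eq)
  show ?thesis
    by (rule induces_alg_iso_on_generators[OF relations generators onto]) (use q in simp_all)
qed

theorem lemma2p7:
  fixes n :: nat and q :: "nat \<Rightarrow> 'k::field_char_0"
  assumes "alg_closed TYPE('k)"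
    and "n \<ge> 3"
    and "\<forall>i<n. q i \<noteq> 0"
  shows
    "(\<forall>\<alpha> :: nat \<Rightarrow> 'k. (\<forall>i<n. \<alpha> i \<noteq> 0) \<longrightarrow>
        (let p = (\<lambda>i. \<alpha> ((i + n - 1) mod n) / \<alpha> i * q i) in
         \<exists>f. alg_iso n q p f \<and>
           (\<forall>i<n. f (cls n q (ee i)) = cls n p (ee i)
                \<and> f (cls n q (aa i)) = cls n p (smult (\<alpha> i) (aa i))
                \<and> f (cls n q (ast i)) = cls n p (ast i))))
     \<and> (let p = (\<lambda>i. q ((i + n - 1) mod n)) in
         \<exists>f. alg_iso n q p f \<and>
           (\<forall>i<n. f (cls n q (ee i)) = cls n p (ee ((i + 1) mod n))
                \<and> f (cls n q (aa i)) = cls n p (aa ((i + 1) mod n))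
                \<and> f (cls n q (ast i)) = cls n p (ast ((i + 1) mod n))))
     \<and> (let p = (\<lambda>i. inverse (q ((n - i) mod n))) in
         \<exists>f. alg_iso n q p f \<and>
           (\<forall>i<n. f (cls n q (ee i)) = cls n p (ee ((n - i) mod n))
                \<and> f (cls n q (aa i)) = cls n p (ast (n - i - 1))
                \<and> f (cls n q (ast i)) = cls n p (aa (n - i - 1))))"
  using alg_iso_rescale[of n _ q] alg_iso_rotate[of n q] alg_iso_reflect[OF assms(3)]
  unfolding Let_def pred_mod_def succ_mod_def neg_mod_def neg_succ_mod_def
  by simp

end
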